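(* Let $d>0$, let $J$ satisfy (J) and (J2), let $f$ satisfy (f3), let $c_*$ be the minimal traveling wave speed, and fix $c\in(0,c_* )$ and a constant $M$ as in the context. For each $\sigma\in(0,1)$ let $\phi_\sigma=\lim_{n\to\infty}A_\sigma^n[\phi_*^\sigma]$ be the solution obtained by the iteration described in the context. Then there exists $\delta_0\in(0,1]$ such that $$\phi_\sigma(x)\ge\phi_\sigma(y)\ \text{ whenever } x\le y\le0,\ \sigma\in(0,\delta_0),$$ and $$\phi_{\sigma_1}(x)\le\phi_{\sigma_2}(x)\ \text{ whenever } 0<\sigma_1\le\sigma_2<1,\ x\le0.$$
   Context: Condition (J): $J\in C(\mathbb{R})\cap L^\infty(\mathbb{R})$, $J\ge 0$, $J(0)>0$, $\int_{\mathbb{R}}J=1$, $J$ even. Condition (J2): there exists $\lambda>0$ with $\int_{\mathbb{R}}J(x)e^{\lambda x}dx<\infty$. Condition (f3): $f\in C^1([0,\infty))$, $f(0)=f(1)=0$, $f>0$ in $(0,1)$, $f'(0)>0>f'(1)$, $f(u)/u$ nonincreasing in $u>0$. Known fact: under (J), (J2), (f3) there is $c_*>0$ such that $d\int_{\mathbb{R}}J(x-y)\phi(y)dy-d\phi(x)+c\phi'(x)+f(\phi(x))=0$ on $\mathbb{R}$, $\phi(-\infty)=1$, $\phi(+\infty)=0$, has a nonincreasing bounded solution iff $c\ge c_*$; such solutions are $C^1$. Construction (for fixed $c\in(0,c_* )$): $M>0$ is chosen so that $\tilde f(u):=(cM-d)u+f(u)$ is increasing on $[0,1]$; $a(x)=\int_{-\infty}^xJ(y)dy$.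 For $\sigma\in(0,1)$, $A_\sigma$ acts on $\{\phi\in C(\mathbb{R}):0\le\phi\le1\}$ by $A_\sigma[\phi](x)=\sigma$ for $x\ge0$ and, for $x<0$, $A_\sigma[\phi](x)=e^{Mx}\sigma+\frac{e^{Mx}}{c}\int_x^0e^{-M\xi}\big[d\int_{-\infty}^0J(\xi-y)\phi(y)dy+d\sigma a(\xi)+\tilde f(\phi(\xi))\big]d\xi$. Fix one nonincreasing traveling wave $\psi$ with speed $c_*$; for each $\sigma$ let $\phi_{*\sigma}$ be the translate of $\psi$ with $\phi_{*\sigma}(0)=\sigma$ and $\phi_*^\sigma=\max\{\phi_{*\sigma},\sigma\}$. The limit $\phi_\sigma$ exists and solves $d\int_{\mathbb{R}}J(x-y)\phi(y)dy-d\phi+c\phi'+f(\phi)=0$ for $x<0$, $\phi(-\infty)=1$, $\phi=\sigma$ on $[0,\infty)$. *)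

theory Defs
  imports "HOL-Analysis.Analysis"
begin

definition kernel_J :: "(real \<Rightarrow> real) \<Rightarrow> bool" where
  "kernel_J J \<longleftrightarrow> continuous_on UNIV J \<and> bounded (range J) \<and> (\<forall>x. 0 \<le> J x) \<and> J 0 > 0
     \<and> integrable lborel J \<and> integral\<^sup>L lborel J = 1 \<and> (\<forall>x. J (- x) = J x)"

text \<open>Condition (J2): finite exponential moment (J is nonnegative, so finiteness = integrability).\<close>
definition kernel_J2 :: "(real \<Rightarrow> real) \<Rightarrow> bool" where
  "kernel_J2 J \<longleftrightarrow> (\<exists>lam>0. integrable lborel (\<lambda>x. J x * exp (lam * x)))"

definition reaction_f3 :: "(real \<Rightarrow> real) \<Rightarrow> bool" where
  "reaction_f3 f \<longleftrightarrow>
     (\<exists>f'. continuous_on {0..} f' \<and> (\<forall>u\<ge>0. (f has_real_derivative f' u) (at u within {0..}))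
        \<and> f' 0 > 0 \<and> f' 1 < 0)
     \<and> f 0 = 0 \<and> f 1 = 0 \<and> (\<forall>u. 0 < u \<and> u < 1 \<longrightarrow> f u > 0)
     \<and> (\<forall>u v. 0 < u \<and> u \<le> v \<longrightarrow> f v / v \<le> f u / u)"

definition travwave :: "(real \<Rightarrow> real) \<Rightarrow> real \<Rightarrow> (real \<Rightarrow> real) \<Rightarrow> real \<Rightarrow> (real \<Rightarrow> real) \<Rightarrow> bool" where
  "travwave J d f c \<phi> \<longleftrightarrow>
     bounded (range \<phi>) \<and> antimono \<phi> \<and> (\<forall>x. \<phi> differentiable at x)
     \<and> (\<forall>x. d * (LINT y|lborel. J (x - y) * \<phi> y) - d * \<phi> x + c * deriv \<phi> x + f (\<phi> x) = 0)
     \<and> (\<phi> \<longlongrightarrow> 1) at_bot \<and> (\<phi> \<longlongrightarrow> 0) at_top"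

definition min_speed :: "(real \<Rightarrow> real) \<Rightarrow> real \<Rightarrow> (real \<Rightarrow> real) \<Rightarrow> real" where
  "min_speed J d f = Inf {c. \<exists>\<phi>. travwave J d f c \<phi>}"

definition ftilde :: "real \<Rightarrow> real \<Rightarrow> real \<Rightarrow> (real \<Rightarrow> real) \<Rightarrow> real \<Rightarrow> real" where
  "ftilde d c M f u = (c * M - d) * u + f u"

definition acum :: "(real \<Rightarrow> real) \<Rightarrow> real \<Rightarrow> real" where
  "acum J x = (LBINT y:{..x}. J y)"

definition A_op :: "(real \<Rightarrow> real) \<Rightarrow> real \<Rightarrow> real \<Rightarrow> real \<Rightarrow> (real \<Rightarrow> real) \<Rightarrow> real
    \<Rightarrow> (real \<Rightarrow> real) \<Rightarrow> real \<Rightarrow> real" where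
  "A_op J d c M f \<sigma> \<phi> x =
     (if 0 \<le> x then \<sigma>
      else exp (M * x) * \<sigma> + exp (M * x) / c *
        (LBINT \<xi>=x..0. exp (- M * \<xi>) *
           (d * (LBINT y:{..0}. J (\<xi> - y) * \<phi> y) + d * \<sigma> * acum J \<xi> + ftilde d c M f (\<phi> \<xi>))))"

text \<open>phi_sigma as the pointwise limit of the iteration starting from max(translate of psi, sigma);
  sh sigma is a shift with psi (sh sigma) = sigma, so psi(x + sh sigma) is the translate equal to sigma at 0.\<close>
definition phi_sig :: "(real \<Rightarrow> real) \<Rightarrow> real \<Rightarrow> real \<Rightarrow> real \<Rightarrow> (real \<Rightarrow> real) \<Rightarrow> (real \<Rightarrow> real)
    \<Rightarrow> (real \<Rightarrow> real) \<Rightarrow> real \<Rightarrow> real \<Rightarrow> real" where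
  "phi_sig J d c M f \<psi> sh \<sigma> x =
     lim (\<lambda>n. ((A_op J d c M f \<sigma>) ^^ n) (\<lambda>z. max (\<psi> (z + sh \<sigma>)) \<sigma>) x)"

end

theory Submission
  imports Defs
begin

text \<open>
  Write \<open>\<phi>\<^sup>\<sigma>\<close> for \<open>\<phi>\<close> extended by the constant \<open>\<sigma>\<close> on \<open>[0,\<infinity>)\<close>. The bracket in the
  definition of \<open>A\<^sub>\<sigma>\<close> equals \<open>d (J * \<phi>\<^sup>\<sigma>)(\<xi>) + ftilde(\<phi>(\<xi>))\<close>. As \<open>J\<close> is a probability
  density and \<open>ftilde\<close> is increasing on \<open>[0,1]\<close>, this is monotone in \<open>(\<sigma>, \<phi>)\<close>, and
  nonincreasing in \<open>\<xi>\<close> when \<open>\<phi>\<close> is. Hence \<open>A\<^sub>\<sigma>\<close> is order preserving in \<open>(\<sigma>, \<phi>)\<close> and maps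
  the nonincreasing functions with values in \<open>[\<sigma>,1]\<close> into themselves. The initial datum
  \<open>max(\<psi>(\<cdot> + s), \<sigma>)\<close> is a subsolution, \<open>\<phi> \<le> A\<^sub>\<sigma> \<phi>\<close>, because \<open>\<psi>\<close> is a nonincreasing
  wave of the larger speed \<open>c\<^sub>*\<close>. So the iterates increase to \<open>\<phi>\<^sub>\<sigma>\<close>, and both monotonicity
  properties pass from the iterates to the limit for every \<open>\<sigma> \<in> (0,1)\<close>; thus \<open>\<delta>\<^sub>0 = 1\<close>.
\<close>

lemma borel_measurable_antimono:
  fixes f :: "real \<Rightarrow> real"
  assumes "antimono f" shows "f \<in> borel_measurable borel"
proof -
  have "mono (\<lambda>x. - f x)" using assms by (auto simp: antimono_def mono_def)
  then have "(\<lambda>x. - (- f x)) \<in> borel_measurable borel"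
    by (intro borel_measurable_uminus borel_measurable_mono)
  then show ?thesis by simp
qed

lemma antimono_has_real_derivative_nonpos:
  assumes "antimono f" and "(f has_real_derivative D) (at x)" shows "D \<le> 0"
proof -
  have "mono_on UNIV (\<lambda>x. - f x)" using assms(1) by (auto simp: antimono_def mono_on_def)
  moreover have "((\<lambda>x. - f x) has_real_derivative - D) (at x)" using assms(2) by (rule DERIV_minus)
  ultimately have "0 \<le> - D" by (rule mono_on_imp_deriv_nonneg) simp
  then show ?thesis by simp
qed

lemma antimono_between_limits:
  fixes f :: "real \<Rightarrow> real"
  assumes "antimono f" and "(f \<longlongrightarrow> a) at_bot" and "(f \<longlongrightarrow> b) at_top"
  shows "b \<le> f x" and "f x \<le> a"
proof -
  have "eventually (\<lambda>y. f y \<le> f x) at_top"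
    unfolding eventually_at_top_linorder using assms(1) by (auto simp: antimono_def)
  from tendsto_upperbound[OF assms(3) this] show "b \<le> f x" by simp
  have "eventually (\<lambda>y. f x \<le> f y) at_bot"
    unfolding eventually_at_bot_linorder using assms(1) by (auto simp: antimono_def)
  from tendsto_lowerbound[OF assms(2) this] show "f x \<le> a" by simp
qed

lemma set_integrable_Icc_bounded:
  fixes g :: "real \<Rightarrow> real"
  assumes "g \<in> borel_measurable borel" and "\<And>x. x \<in> {a..b} \<Longrightarrow> \<bar>g x\<bar> \<le> B"
  shows "set_integrable lborel {a..b} g"
proof (rule set_integrable_bound)
  show "set_integrable lborel {a..b} (\<lambda>_. B)"
    unfolding set_integrable_def by (rule borel_integrable_compact) auto
  show "set_borel_measurable lborel {a..b} g"
    using assms(1) unfolding set_borel_measurable_def by measurable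
  show "AE x in lborel. x \<in> {a..b} \<longrightarrow> norm (g x) \<le> norm B"
    using assms(2) by (auto intro: order_trans[OF _ abs_ge_self])
qed

lemma has_integral_exp_weighted_deriv:
  assumes "\<And>\<xi>. (g has_real_derivative g' \<xi>) (at \<xi>)" and "a \<le> b"
  shows "((\<lambda>\<xi>. exp (- M * \<xi>) * (M * g \<xi> - g' \<xi>)) has_integral
           exp (- M * a) * g a - exp (- M * b) * g b) {a..b}"
proof -
  have "((\<lambda>\<xi>. - exp (- M * \<xi>)) has_real_derivative M * exp (- M * \<xi>)) (at \<xi>)" for \<xi>
    by (auto intro!: derivative_eq_intros)
  from DERIV_mult[OF this assms(1)]
  have "((\<lambda>\<xi>. - exp (- M * \<xi>) * g \<xi>) has_real_derivative exp (- M * \<xi>) * (M * g \<xi> - g' \<xi>)) (at \<xi>)"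
    for \<xi>
    by (rule DERIV_cong) (simp add: algebra_simps)
  then have "((\<lambda>\<xi>. exp (- M * \<xi>) * (M * g \<xi> - g' \<xi>)) has_integral
      (- exp (- M * b) * g b) - (- exp (- M * a) * g a)) {a..b}"
    by (intro fundamental_theorem_of_calculus assms(2))
       (auto simp: has_real_derivative_iff_has_vector_derivative[symmetric] intro: has_field_derivative_at_within)
  then show ?thesis by simp
qed

section \<open>Kernel convolution\<close>

definition kernel_conv :: "(real \<Rightarrow> real) \<Rightarrow> (real \<Rightarrow> real) \<Rightarrow> real \<Rightarrow> real" where
  "kernel_conv J p \<xi> = (LINT y|lborel. J (\<xi> - y) * p y)"

lemma kernel_J_borel_measurable: "kernel_J J \<Longrightarrow> J \<in> borel_measurable borel"
  unfolding kernel_J_def by (auto intro: borel_measurable_continuous_onI)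

lemma kernel_J_integral_reflect:
  assumes "kernel_J J"
  shows "integrable lborel (\<lambda>y. J (\<xi> - y))" and "(LINT y|lborel. J (\<xi> - y)) = 1"
proof -
  have J: "integrable lborel J" "(LINT y|lborel. J y) = 1" using assms unfolding kernel_J_def by auto
  from lborel_integrable_real_affine[OF J(1), of "-1" \<xi>]
  show "integrable lborel (\<lambda>y. J (\<xi> - y))" by simp
  have "(LINT y|lborel. J y) = \<bar>-1\<bar> *\<^sub>R (LINT y|lborel. J (\<xi> + (-1) * y))"
    by (rule lborel_integral_real_affine) simp
  with J(2) show "(LINT y|lborel. J (\<xi> - y)) = 1" by simp
qed

lemma kernel_J_integrable_mult_bounded:
  assumes J: "kernel_J J" and [measurable]: "p \<in> borel_measurable borel" and "\<And>y. \<bar>p y\<bar> \<le> B"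
  shows "integrable lborel (\<lambda>y. J (\<xi> - y) * p y)"
proof (rule Bochner_Integration.integrable_bound)
  have [measurable]: "J \<in> borel_measurable borel" using J by (rule kernel_J_borel_measurable)
  show "integrable lborel (\<lambda>y. J (\<xi> - y) * B)"
    using kernel_J_integral_reflect(1)[OF J] by simp
  show "(\<lambda>y. J (\<xi> - y) * p y) \<in> borel_measurable lborel" by measurable
  show "AE y in lborel. norm (J (\<xi> - y) * p y) \<le> norm (J (\<xi> - y) * B)"
    using assms(3) J unfolding kernel_J_def
    by (auto simp: abs_mult intro!: mult_left_mono order_trans[OF _ abs_ge_self])
qed

lemma kernel_conv_mono:
  assumes J: "kernel_J J" and "p \<in> borel_measurable borel" "q \<in> borel_measurable borel"
    and "\<And>y. \<bar>p y\<bar> \<le> B" "\<And>y. \<bar>q y\<bar> \<le> B" and "\<And>y. p y \<le> q y"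
  shows "kernel_conv J p \<xi> \<le> kernel_conv J q \<xi>"
  unfolding kernel_conv_def
proof (rule integral_mono)
  show "integrable lborel (\<lambda>y. J (\<xi> - y) * p y)" "integrable lborel (\<lambda>y. J (\<xi> - y) * q y)"
    using assms by (auto intro: kernel_J_integrable_mult_bounded)
  show "J (\<xi> - y) * p y \<le> J (\<xi> - y) * q y" for y
    using J assms(6) unfolding kernel_J_def by (auto intro: mult_left_mono)
qed

lemma kernel_conv_const: "kernel_J J \<Longrightarrow> kernel_conv J (\<lambda>_. k) \<xi> = k"
  unfolding kernel_conv_def using kernel_J_integral_reflect(2) by simp

lemma kernel_conv_translate:
  "kernel_conv J (\<lambda>y. p (y + s)) \<xi> = (LINT y|lborel. J (\<xi> + s - y) * p y)"
proof -
  have "(LINT y|lborel. J (\<xi> + s - y) * p y)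
      = \<bar>1\<bar> *\<^sub>R (LINT y|lborel. J (\<xi> + s - (s + 1 * y)) * p (s + 1 * y))"
    by (rule lborel_integral_real_affine) simp
  then show ?thesis unfolding kernel_conv_def by (simp add: add.commute)
qed

lemma kernel_conv_antimono:
  assumes J: "kernel_J J" and p: "antimono p" and "\<And>y. \<bar>p y\<bar> \<le> B"
  shows "antimono (kernel_conv J p)"
proof (rule antimonoI)
  have [measurable]: "p \<in> borel_measurable borel" using p by (rule borel_measurable_antimono)
  have [measurable]: "J \<in> borel_measurable borel" using J by (rule kernel_J_borel_measurable)
  have conv_eq: "kernel_conv J p \<xi> = (LINT t|lborel. J t * p (\<xi> - t))" for \<xi>
  proof -
    have "kernel_conv J p \<xi>
        = \<bar>-1\<bar> *\<^sub>R (LINT t|lborel. J (\<xi> - (\<xi> + (-1) * t)) * p (\<xi> + (-1) * t))"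
      unfolding kernel_conv_def by (rule lborel_integral_real_affine) simp
    then show ?thesis by simp
  qed
  have integrable: "integrable lborel (\<lambda>t. J t * p (\<xi> - t))" for \<xi>
  proof -
    have "J (- t) = J t" for t using J unfolding kernel_J_def by blast
    then show ?thesis
      using kernel_J_integrable_mult_bounded[OF J, of "\<lambda>t. p (\<xi> - t)" B 0] assms(3) by simp
  qed
  fix \<xi>1 \<xi>2 :: real assume "\<xi>1 \<le> \<xi>2"
  moreover have "0 \<le> J t" for t using J unfolding kernel_J_def by blast
  ultimately have "J t * p (\<xi>2 - t) \<le> J t * p (\<xi>1 - t)" for t
    by (simp add: mult_left_mono antimonoD[OF p])
  then show "kernel_conv J p \<xi>2 \<le> kernel_conv J p \<xi>1"
    unfolding conv_eq by (intro integral_mono integrable)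
qed

lemma acum_eq_kernel_conv: "acum J \<xi> = kernel_conv J (indicator {0..}) \<xi>"
proof -
  have "acum J \<xi> = (LINT y|lborel. indicator {..\<xi>} y *\<^sub>R J y)"
    unfolding acum_def set_lebesgue_integral_def by simp
  also have "\<dots> = \<bar>-1\<bar> *\<^sub>R
      (LINT y|lborel. indicator {..\<xi>} (\<xi> + (-1) * y) *\<^sub>R J (\<xi> + (-1) * y))"
    by (rule lborel_integral_real_affine) simp
  also have "\<dots> = kernel_conv J (indicator {0..}) \<xi>"
    unfolding kernel_conv_def by (auto intro!: Bochner_Integration.integral_cong simp: indicator_def)
  finally show ?thesis .
qed

definition extend_const :: "real \<Rightarrow> (real \<Rightarrow> real) \<Rightarrow> real \<Rightarrow> real" where
  "extend_const \<sigma> \<phi> y = (if y < 0 then \<phi> y else \<sigma>)"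

lemma kernel_conv_extend_const:
  assumes J: "kernel_J J" and [measurable]: "\<phi> \<in> borel_measurable borel" and "\<And>y. \<bar>\<phi> y\<bar> \<le> B"
  shows "(LBINT y:{..0}. J (\<xi> - y) * \<phi> y) + \<sigma> * acum J \<xi> = kernel_conv J (extend_const \<sigma> \<phi>) \<xi>"
proof -
  have [measurable]: "J \<in> borel_measurable borel" using J by (rule kernel_J_borel_measurable)
  have left: "(LBINT y:{..0}. J (\<xi> - y) * \<phi> y) = (LINT y|lborel. J (\<xi> - y) * (indicator {..<0} y * \<phi> y))"
    unfolding set_lebesgue_integral_def
  proof (rule integral_cong_AE)
    show "AE y in lborel. indicator {..0} y *\<^sub>R (J (\<xi> - y) * \<phi> y) = J (\<xi> - y) * (indicator {..<0} y * \<phi> y)"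
      using AE_lborel_singleton[of 0] by eventually_elim (auto simp: indicator_def)
  qed measurable
  have right: "\<sigma> * acum J \<xi> = (LINT y|lborel. J (\<xi> - y) * (\<sigma> * indicator {0..} y))"
    unfolding acum_eq_kernel_conv kernel_conv_def by (simp add: mult_ac)
  have int_left: "integrable lborel (\<lambda>y. J (\<xi> - y) * (indicator {..<0} y * \<phi> y))"
    by (rule kernel_J_integrable_mult_bounded[OF J, where B = B])
       (use assms(3) order_trans[OF abs_ge_zero assms(3)] in \<open>auto simp: indicator_def\<close>)
  have int_right: "integrable lborel (\<lambda>y. J (\<xi> - y) * (\<sigma> * indicator {0..} y))"
    by (rule kernel_J_integrable_mult_bounded[OF J, where B = "\<bar>\<sigma>\<bar>"]) (auto simp: indicator_def)
  show ?thesis unfolding left right kernel_conv_def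
    by (subst Bochner_Integration.integral_add[OF int_left int_right, symmetric],
        rule Bochner_Integration.integral_cong) (simp_all add: extend_const_def indicator_def)
qed

lemma travwave_antimono: "travwave J d f cs \<psi> \<Longrightarrow> antimono \<psi>"
  unfolding travwave_def by blast

lemma travwave_bounds:
  assumes "travwave J d f cs \<psi>" shows "0 \<le> \<psi> x" and "\<psi> x \<le> 1"
proof -
  have "antimono \<psi>" "(\<psi> \<longlongrightarrow> 1) at_bot" "(\<psi> \<longlongrightarrow> 0) at_top"
    using assms unfolding travwave_def by blast+
  then show "0 \<le> \<psi> x" "\<psi> x \<le> 1" by (rule antimono_between_limits)+
qed

lemma travwave_deriv_nonpos:
  assumes "travwave J d f cs \<psi>"
  shows "(\<psi> has_real_derivative deriv \<psi> x) (at x)" and "deriv \<psi> x \<le> 0"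
proof -
  show D: "(\<psi> has_real_derivative deriv \<psi> x) (at x)"
    using assms unfolding travwave_def by (simp add: DERIV_deriv_iff_real_differentiable)
  show "deriv \<psi> x \<le> 0"
    using antimono_has_real_derivative_nonpos[OF travwave_antimono[OF assms] D] .
qed

lemma wave_initial_eq:
  fixes \<psi> :: "real \<Rightarrow> real"
  assumes "antimono \<psi>" and "\<psi> s = \<sigma>" and "x \<le> 0"
  shows "max (\<psi> (x + s)) \<sigma> = \<psi> (x + s)"
  using antimonoD[OF assms(1), of "x + s" s] assms(2,3) by simp

text \<open>
  The shift is a function of \<open>\<sigma>\<close>: two different shifts with the same value \<open>\<sigma>\<close> may give
  different translates where \<open>\<psi>\<close> is flat.
\<close>
lemma wave_initial_mono:
  fixes \<psi> sh :: "real \<Rightarrow> real"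
  assumes "antimono \<psi>" and "\<psi> (sh \<sigma>1) = \<sigma>1" and "\<psi> (sh \<sigma>2) = \<sigma>2" and "\<sigma>1 \<le> \<sigma>2"
  shows "max (\<psi> (z + sh \<sigma>1)) \<sigma>1 \<le> max (\<psi> (z + sh \<sigma>2)) \<sigma>2"
proof (cases "\<sigma>1 = \<sigma>2")
  case False
  have "sh \<sigma>2 \<le> sh \<sigma>1"
  proof (rule ccontr)
    assume "\<not> sh \<sigma>2 \<le> sh \<sigma>1"
    then have "\<psi> (sh \<sigma>2) \<le> \<psi> (sh \<sigma>1)" using antimonoD[OF assms(1), of "sh \<sigma>1" "sh \<sigma>2"] by simp
    with assms(2-4) False show False by simp
  qed
  then have "\<psi> (z + sh \<sigma>1) \<le> \<psi> (z + sh \<sigma>2)" using antimonoD[OF assms(1)] by simp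
  then show ?thesis using assms(4) by (rule max.mono)
qed simp

definition admissible :: "real \<Rightarrow> (real \<Rightarrow> real) \<Rightarrow> bool" where
  "admissible \<sigma> \<phi> \<longleftrightarrow> antimono \<phi> \<and> (\<forall>y. \<sigma> \<le> \<phi> y \<and> \<phi> y \<le> 1)"

lemma admissible_abs_le_1:
  assumes "admissible \<sigma> \<phi>" and "0 \<le> \<sigma>" shows "\<bar>\<phi> y\<bar> \<le> 1"
proof -
  have "\<sigma> \<le> \<phi> y" "\<phi> y \<le> 1" using assms(1) unfolding admissible_def by auto
  with assms(2) show ?thesis by linarith
qed

lemma admissible_borel_measurable: "admissible \<sigma> \<phi> \<Longrightarrow> \<phi> \<in> borel_measurable borel"
  unfolding admissible_def by (blast intro: borel_measurable_antimono)

lemma admissible_extend_const: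
  assumes "admissible \<sigma> \<phi>" shows "admissible \<sigma> (extend_const \<sigma> \<phi>)"
  using assms order_trans[of \<sigma> "\<phi> 0" 1]
  unfolding admissible_def antimono_def extend_const_def by auto

lemma kernel_conv_admissible_bounds:
  assumes J: "kernel_J J" and p: "admissible \<sigma> p" and "0 \<le> \<sigma>"
  shows "\<sigma> \<le> kernel_conv J p \<xi>" and "kernel_conv J p \<xi> \<le> 1"
proof -
  have bounds: "\<sigma> \<le> p y" "p y \<le> 1" for y using p unfolding admissible_def by auto
  have abs_p: "\<bar>p y\<bar> \<le> 1" for y using admissible_abs_le_1[OF p assms(3)] .
  have abs_\<sigma>: "\<bar>\<sigma>\<bar> \<le> 1" using assms(3) bounds[of 0] by simp
  note p_borel = admissible_borel_measurable[OF p]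
  have "kernel_conv J (\<lambda>_. \<sigma>) \<xi> \<le> kernel_conv J p \<xi>"
    by (rule kernel_conv_mono[OF J borel_measurable_const p_borel abs_\<sigma> abs_p bounds(1)])
  then show "\<sigma> \<le> kernel_conv J p \<xi>" by (simp add: kernel_conv_const[OF J])
  have "kernel_conv J p \<xi> \<le> kernel_conv J (\<lambda>_. 1) \<xi>"
    by (rule kernel_conv_mono[OF J p_borel borel_measurable_const abs_p _ bounds(2)]) simp
  then show "kernel_conv J p \<xi> \<le> 1" by (simp add: kernel_conv_const[OF J])
qed

lemma admissible_wave_initial:
  assumes "travwave J d f cs \<psi>" and "\<sigma> \<le> 1"
  shows "admissible \<sigma> (\<lambda>z. max (\<psi> (z + s)) \<sigma>)"
proof -
  have "max (\<psi> (y + s)) \<sigma> \<le> max (\<psi> (x + s)) \<sigma>" if "x \<le> y" for x y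
    using antimonoD[OF travwave_antimono[OF assms(1)], of "x + s" "y + s"] that
    by (simp add: max.coboundedI1)
  then have "antimono (\<lambda>z. max (\<psi> (z + s)) \<sigma>)" by (rule antimonoI)
  then show ?thesis using travwave_bounds[OF assms(1)] assms(2) unfolding admissible_def by auto
qed

lemma kernel_conv_wave_le_initial:
  assumes J: "kernel_J J" and tw: "travwave J d f cs \<psi>" and "\<psi> s = \<sigma>" and "0 \<le> \<sigma>"
  shows "kernel_conv J (\<lambda>y. \<psi> (y + s)) \<xi> \<le> kernel_conv J (extend_const \<sigma> (\<lambda>z. max (\<psi> (z + s)) \<sigma>)) \<xi>"
proof (rule kernel_conv_mono[OF J, where B = 1])
  note \<psi> = travwave_antimono[OF tw]
  have "\<sigma> \<le> 1" using travwave_bounds(2)[OF tw, of s] assms(3) by simp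
  then have ext: "admissible \<sigma> (extend_const \<sigma> (\<lambda>z. max (\<psi> (z + s)) \<sigma>))"
    by (intro admissible_extend_const admissible_wave_initial[OF tw])
  show "(\<lambda>y. \<psi> (y + s)) \<in> borel_measurable borel"
    using borel_measurable_antimono[OF \<psi>] by measurable
  show "\<bar>\<psi> (y + s)\<bar> \<le> 1" for y using travwave_bounds[OF tw] by (simp add: abs_le_iff)
  show "extend_const \<sigma> (\<lambda>z. max (\<psi> (z + s)) \<sigma>) \<in> borel_measurable borel"
    using ext by (rule admissible_borel_measurable)
  show "\<bar>extend_const \<sigma> (\<lambda>z. max (\<psi> (z + s)) \<sigma>) y\<bar> \<le> 1" for y
    using ext assms(4) by (rule admissible_abs_le_1)
  show "\<psi> (y + s) \<le> extend_const \<sigma> (\<lambda>z. max (\<psi> (z + s)) \<sigma>) y" for y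
    using antimonoD[OF \<psi>, of s "y + s"] assms(3) by (simp add: extend_const_def)
qed

section \<open>The operator \<open>A\<^sub>\<sigma>\<close>\<close>

definition A_integrand :: "(real \<Rightarrow> real) \<Rightarrow> real \<Rightarrow> real \<Rightarrow> real \<Rightarrow> (real \<Rightarrow> real) \<Rightarrow> real
    \<Rightarrow> (real \<Rightarrow> real) \<Rightarrow> real \<Rightarrow> real" where
  "A_integrand J d c M f \<sigma> \<phi> \<xi> =
     d * (LBINT y:{..0}. J (\<xi> - y) * \<phi> y) + d * \<sigma> * acum J \<xi> + ftilde d c M f (\<phi> \<xi>)"

lemma A_op_eq_A_integrand:
  "A_op J d c M f \<sigma> \<phi> x = (if 0 \<le> x then \<sigma> else exp (M * x) * \<sigma> + exp (M * x) / c *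
     (LBINT \<xi>=x..0. exp (- M * \<xi>) * A_integrand J d c M f \<sigma> \<phi> \<xi>))"
  unfolding A_op_def A_integrand_def by simp

locale A_op_setting =
  fixes J f :: "real \<Rightarrow> real" and d c M :: real
  assumes d_pos: "0 < d" and kernel: "kernel_J J" and reaction: "reaction_f3 f"
    and c_pos: "0 < c" and M_pos: "0 < M"
    and ftilde_strict_mono: "strict_mono_on {0..1} (ftilde d c M f)"
begin

abbreviation A :: "real \<Rightarrow> (real \<Rightarrow> real) \<Rightarrow> real \<Rightarrow> real" where
  "A \<equiv> A_op J d c M f"

abbreviation G :: "real \<Rightarrow> (real \<Rightarrow> real) \<Rightarrow> real \<Rightarrow> real" where
  "G \<equiv> A_integrand J d c M f"

lemma ftilde_mono:
  assumes "0 \<le> u" and "u \<le> v" and "v \<le> 1" shows "ftilde d c M f u \<le> ftilde d c M f v"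
proof (cases "u = v")
  case False
  with assms have "ftilde d c M f u < ftilde d c M f v"
    by (intro strict_mono_onD[OF ftilde_strict_mono]) auto
  then show ?thesis by simp
qed simp

lemma ftilde_one: "ftilde d c M f 1 = c * M - d"
proof -
  have "f 1 = 0" using reaction unfolding reaction_f3_def by blast
  then show ?thesis unfolding ftilde_def by simp
qed

lemma ftilde_ge_linear:
  assumes "0 < u" and "u < 1" shows "(c * M - d) * u \<le> ftilde d c M f u"
proof -
  have "0 < f u" using reaction assms unfolding reaction_f3_def by blast
  then show ?thesis unfolding ftilde_def by simp
qed

lemma A_integrand_eq_kernel_conv:
  assumes "admissible \<sigma> \<phi>" and "0 \<le> \<sigma>"
  shows "G \<sigma> \<phi> \<xi> = d * kernel_conv J (extend_const \<sigma> \<phi>) \<xi> + ftilde d c M f (\<phi> \<xi>)"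
proof -
  have conv: "(LBINT y:{..0}. J (\<xi> - y) * \<phi> y) + \<sigma> * acum J \<xi> = kernel_conv J (extend_const \<sigma> \<phi>) \<xi>"
    by (rule kernel_conv_extend_const[OF kernel admissible_borel_measurable[OF assms(1)]
          admissible_abs_le_1[OF assms]])
  show ?thesis unfolding A_integrand_def conv[symmetric] by (simp add: algebra_simps)
qed

lemma A_integrand_bounds:
  assumes "admissible \<sigma> \<phi>" and "0 < \<sigma>" and "\<sigma> < 1"
  shows "c * M * \<sigma> \<le> G \<sigma> \<phi> \<xi>" and "G \<sigma> \<phi> \<xi> \<le> c * M"
proof -
  have \<phi>: "\<sigma> \<le> \<phi> \<xi>" "\<phi> \<xi> \<le> 1" using assms(1) unfolding admissible_def by auto
  have conv: "\<sigma> \<le> kernel_conv J (extend_const \<sigma> \<phi>) \<xi>" "kernel_conv J (extend_const \<sigma> \<phi>) \<xi> \<le> 1"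
    using kernel_conv_admissible_bounds[OF kernel admissible_extend_const[OF assms(1)]] assms(2) by auto
  have "(c * M - d) * \<sigma> \<le> ftilde d c M f (\<phi> \<xi>)"
    using ftilde_ge_linear[OF assms(2,3)] ftilde_mono[of \<sigma> "\<phi> \<xi>"] \<phi> assms(2) by linarith
  moreover have "ftilde d c M f (\<phi> \<xi>) \<le> c * M - d"
    using ftilde_mono[of "\<phi> \<xi>" 1] \<phi> assms(2) ftilde_one by linarith
  moreover have "d * \<sigma> \<le> d * kernel_conv J (extend_const \<sigma> \<phi>) \<xi>"
    and "d * kernel_conv J (extend_const \<sigma> \<phi>) \<xi> \<le> d"
    using conv d_pos by simp_all
  ultimately show "c * M * \<sigma> \<le> G \<sigma> \<phi> \<xi>" and "G \<sigma> \<phi> \<xi> \<le> c * M"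
    unfolding A_integrand_eq_kernel_conv[OF assms(1) less_imp_le[OF assms(2)]] by (simp_all add: algebra_simps)
qed

lemma A_integrand_mono:
  assumes \<phi>: "admissible \<sigma>1 \<phi>" and \<theta>: "admissible \<sigma>2 \<theta>" and "0 \<le> \<sigma>1" and "\<sigma>1 \<le> \<sigma>2"
    and le: "\<And>y. \<phi> y \<le> \<theta> y"
  shows "G \<sigma>1 \<phi> \<xi> \<le> G \<sigma>2 \<theta> \<xi>"
proof -
  have \<sigma>2: "0 \<le> \<sigma>2" using assms(3,4) by simp
  note ext1 = admissible_extend_const[OF \<phi>] and ext2 = admissible_extend_const[OF \<theta>]
  have "kernel_conv J (extend_const \<sigma>1 \<phi>) \<xi> \<le> kernel_conv J (extend_const \<sigma>2 \<theta>) \<xi>"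
    by (rule kernel_conv_mono[OF kernel admissible_borel_measurable[OF ext1] admissible_borel_measurable[OF ext2]
          admissible_abs_le_1[OF ext1 assms(3)] admissible_abs_le_1[OF ext2 \<sigma>2]])
       (simp add: extend_const_def le assms(4))
  moreover have "ftilde d c M f (\<phi> \<xi>) \<le> ftilde d c M f (\<theta> \<xi>)"
    using \<phi> \<theta> le[of \<xi>] assms(3) unfolding admissible_def by (intro ftilde_mono) (auto intro: order_trans)
  ultimately show ?thesis
    unfolding A_integrand_eq_kernel_conv[OF \<phi> assms(3)] A_integrand_eq_kernel_conv[OF \<theta> \<sigma>2]
    using d_pos by (simp add: add_mono)
qed

lemma A_integrand_antimono:
  assumes \<phi>: "admissible \<sigma> \<phi>" and "0 \<le> \<sigma>"
  shows "antimono (G \<sigma> \<phi>)"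
proof (rule antimonoI)
  note ext = admissible_extend_const[OF \<phi>]
  have conv_anti: "antimono (kernel_conv J (extend_const \<sigma> \<phi>))"
    using ext admissible_abs_le_1[OF ext assms(2)] unfolding admissible_def
    by (blast intro: kernel_conv_antimono[OF kernel])
  fix x y :: real assume "x \<le> y"
  then have "kernel_conv J (extend_const \<sigma> \<phi>) y \<le> kernel_conv J (extend_const \<sigma> \<phi>) x"
    by (rule antimonoD[OF conv_anti])
  moreover have "ftilde d c M f (\<phi> y) \<le> ftilde d c M f (\<phi> x)"
    using \<phi> \<open>x \<le> y\<close> assms(2) unfolding admissible_def
    by (intro ftilde_mono) (auto intro: order_trans dest: antimonoD)
  ultimately show "G \<sigma> \<phi> y \<le> G \<sigma> \<phi> x"
    unfolding A_integrand_eq_kernel_conv[OF assms] using d_pos by (simp add: add_mono)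
qed

lemma set_integrable_weighted_A_integrand:
  assumes "admissible \<sigma> \<phi>" and "0 < \<sigma>" and "\<sigma> < 1"
  shows "set_integrable lborel {a..b} (\<lambda>\<xi>. exp (- M * \<xi>) * (G \<sigma> \<phi> (\<xi> + x) - k))"
proof (rule set_integrable_Icc_bounded)
  have [measurable]: "G \<sigma> \<phi> \<in> borel_measurable borel"
    using A_integrand_antimono[OF assms(1)] assms(2) by (simp add: borel_measurable_antimono)
  show "(\<lambda>\<xi>. exp (- M * \<xi>) * (G \<sigma> \<phi> (\<xi> + x) - k)) \<in> borel_measurable borel" by measurable
  fix \<xi> assume "\<xi> \<in> {a..b}"
  then have "exp (- M * \<xi>) \<le> exp (- M * a)" using M_pos by simp
  moreover have "0 \<le> c * M * \<sigma>" using c_pos M_pos assms(2) by simp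
  then have "\<bar>G \<sigma> \<phi> (\<xi> + x) - k\<bar> \<le> c * M + \<bar>k\<bar>"
    using A_integrand_bounds[OF assms, of "\<xi> + x"] by linarith
  ultimately show "\<bar>exp (- M * \<xi>) * (G \<sigma> \<phi> (\<xi> + x) - k)\<bar> \<le> exp (- M * a) * (c * M + \<bar>k\<bar>)"
    by (simp add: abs_mult mult_mono)
qed

lemma weighted_A_integrand_integrable_on:
  assumes "admissible \<sigma> \<phi>" and "0 < \<sigma>" and "\<sigma> < 1"
  shows "(\<lambda>\<xi>. exp (- M * \<xi>) * (G \<sigma> \<phi> (\<xi> + x) - k)) integrable_on {a..b}"
  using set_borel_integral_eq_integral(1)[OF set_integrable_weighted_A_integrand[OF assms]] .

lemma A_op_eq_integral:
  assumes "admissible \<sigma> \<phi>" and "0 < \<sigma>" and "\<sigma> < 1" and "x < 0"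
  shows "A \<sigma> \<phi> x = exp (M * x) * \<sigma> + exp (M * x) / c * integral {x..0} (\<lambda>\<xi>. exp (- M * \<xi>) * G \<sigma> \<phi> \<xi>)"
proof -
  have "set_integrable lborel {x..0} (\<lambda>\<xi>. exp (- M * \<xi>) * G \<sigma> \<phi> \<xi>)"
    using set_integrable_weighted_A_integrand[OF assms(1-3), of x 0 0 0] by simp
  then have "(LBINT \<xi>:{x..0}. exp (- M * \<xi>) * G \<sigma> \<phi> \<xi>) = integral {x..0} (\<lambda>\<xi>. exp (- M * \<xi>) * G \<sigma> \<phi> \<xi>)"
    by (rule set_borel_integral_eq_integral(2))
  moreover have "(LBINT \<xi>=ereal x..0. exp (- M * \<xi>) * G \<sigma> \<phi> \<xi>) = (LBINT \<xi>:{x..0}. exp (- M * \<xi>) * G \<sigma> \<phi> \<xi>)"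
    using interval_integral_Icc[of x 0] assms(4) by (simp add: zero_ereal_def)
  ultimately show ?thesis using assms(4) by (simp add: A_op_eq_A_integrand)
qed

text \<open>
  Substitute \<open>\<xi> = x + t\<close> and split off the part \<open>c M \<sigma>\<close> of the integrand, which integrates
  exactly to the gap between \<open>exp(M x) \<sigma>\<close> and \<open>\<sigma>\<close>. In this form \<open>\<sigma> \<le> A \<sigma> \<phi>\<close> and antitonicity of
  \<open>A \<sigma> \<phi>\<close> follow from \<open>G \<sigma> \<phi> \<ge> c M \<sigma>\<close> and antitonicity of \<open>G \<sigma> \<phi>\<close>.
\<close>
lemma A_op_eq_shifted_integral:
  assumes "admissible \<sigma> \<phi>" and "0 < \<sigma>" and "\<sigma> < 1"
  shows "A \<sigma> \<phi> x = \<sigma> + integral {0..-x} (\<lambda>t. exp (- M * t) * (G \<sigma> \<phi> (t + x) - c * M * \<sigma>)) / c"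
proof (cases "x < 0")
  case False
  then show ?thesis
    using integral_null[of 0 "- x" "\<lambda>t. exp (- M * t) * (G \<sigma> \<phi> (t + x) - c * M * \<sigma>)"]
    by (simp add: A_op_def)
next
  case True
  let ?H = "\<lambda>\<xi>. exp (- M * \<xi>) * (G \<sigma> \<phi> \<xi> - c * M * \<sigma>)"
  have int_H: "?H integrable_on {x..0}"
    using weighted_A_integrand_integrable_on[OF assms, of 0 "c * M * \<sigma>"] by simp
  have const: "((\<lambda>\<xi>. exp (- M * \<xi>) * (c * M * \<sigma>)) has_integral c * \<sigma> * (exp (- M * x) - 1)) {x..0}"
    using has_integral_exp_weighted_deriv[of "\<lambda>_. c * \<sigma>" "\<lambda>_. 0" x 0 M] True
    by (simp add: algebra_simps)
  have "integral {x..0} (\<lambda>\<xi>. exp (- M * \<xi>) * G \<sigma> \<phi> \<xi>)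
      = integral {x..0} ?H + integral {x..0} (\<lambda>\<xi>. exp (- M * \<xi>) * (c * M * \<sigma>))"
    using integral_add[OF int_H has_integral_integrable[OF const]] by (simp add: algebra_simps)
  also have "\<dots> = integral {x..0} ?H + c * \<sigma> * (exp (- M * x) - 1)"
    by (simp only: integral_unique[OF const])
  finally have split: "integral {x..0} (\<lambda>\<xi>. exp (- M * \<xi>) * G \<sigma> \<phi> \<xi>)
      = integral {x..0} ?H + c * \<sigma> * (exp (- M * x) - 1)" .
  have "exp (M * x) * integral {x..0} ?H = integral {x..0} (\<lambda>\<xi>. exp (M * x) * ?H \<xi>)"
    by simp
  also have "\<dots> = integral {0..-x} (\<lambda>t. exp (M * x) * ?H (t + x))"
    using integral_shift_real_ivl[of x x 0 "\<lambda>\<xi>. exp (M * x) * ?H \<xi>"] by simp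
  also have "\<dots> = integral {0..-x} (\<lambda>t. exp (- M * t) * (G \<sigma> \<phi> (t + x) - c * M * \<sigma>))"
  proof (rule integral_cong)
    fix t
    have "exp (M * x) * exp (- M * (t + x)) = exp (- M * t)" by (simp add: algebra_simps flip: exp_add)
    then show "exp (M * x) * ?H (t + x) = exp (- M * t) * (G \<sigma> \<phi> (t + x) - c * M * \<sigma>)"
      by (simp only: mult.assoc[symmetric])
  qed
  finally have shift: "exp (M * x) * integral {x..0} ?H
      = integral {0..-x} (\<lambda>t. exp (- M * t) * (G \<sigma> \<phi> (t + x) - c * M * \<sigma>))" .
  have "exp (M * x) * exp (- M * x) = 1" by (simp flip: exp_add)
  then show ?thesis
    unfolding A_op_eq_integral[OF assms True] split shift[symmetric] using c_pos
    by (simp add: field_simps)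
qed

lemma A_op_bounds:
  assumes "admissible \<sigma> \<phi>" and "0 < \<sigma>" and "\<sigma> < 1"
  shows "\<sigma> \<le> A \<sigma> \<phi> x" and "A \<sigma> \<phi> x \<le> 1"
proof -
  let ?h = "\<lambda>t. exp (- M * t) * (G \<sigma> \<phi> (t + x) - c * M * \<sigma>)"
  have int_h: "?h integrable_on {0..-x}" by (rule weighted_A_integrand_integrable_on[OF assms])
  have h_bounds: "0 \<le> ?h t" "?h t \<le> exp (- M * t) * (c * M * (1 - \<sigma>))" for t
    using A_integrand_bounds[OF assms, of "t + x"] by (simp_all add: algebra_simps)
  have "0 \<le> integral {0..-x} ?h"
    using int_h h_bounds(1) by (rule integral_nonneg)
  then show "\<sigma> \<le> A \<sigma> \<phi> x"
    unfolding A_op_eq_shifted_integral[OF assms] using c_pos by simp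
  show "A \<sigma> \<phi> x \<le> 1"
  proof (cases "x < 0")
    case True
    have "((\<lambda>t. exp (- M * t) * (c * M * (1 - \<sigma>))) has_integral c * (1 - \<sigma>) * (1 - exp (M * x))) {0..-x}"
      using has_integral_exp_weighted_deriv[of "\<lambda>_. c * (1 - \<sigma>)" "\<lambda>_. 0" 0 "- x" M] True
      by (simp add: algebra_simps)
    then have "integral {0..-x} ?h \<le> c * (1 - \<sigma>) * (1 - exp (M * x))"
      using int_h h_bounds(2) by (intro has_integral_le[OF integrable_integral]) auto
    also have "\<dots> \<le> c * (1 - \<sigma>)" using c_pos assms(3) by simp
    finally show ?thesis
      unfolding A_op_eq_shifted_integral[OF assms] using c_pos by (simp add: field_simps)
  qed (use assms in \<open>simp add: A_op_def\<close>)
qed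

lemma A_op_antimono:
  assumes "admissible \<sigma> \<phi>" and "0 < \<sigma>" and "\<sigma> < 1"
  shows "antimono (A \<sigma> \<phi>)"
proof (rule antimonoI)
  fix x1 x2 :: real assume "x1 \<le> x2"
  let ?h = "\<lambda>x t. exp (- M * t) * (G \<sigma> \<phi> (t + x) - c * M * \<sigma>)"
  have int_h: "?h x integrable_on {a..b}" for x a b by (rule weighted_A_integrand_integrable_on[OF assms])
  have "integral {0..-x2} (?h x2) \<le> integral {0..-x2} (?h x1)"
  proof (rule integral_le[OF int_h int_h])
    fix t
    have "G \<sigma> \<phi> (t + x2) \<le> G \<sigma> \<phi> (t + x1)"
      using A_integrand_antimono[OF assms(1)] assms(2) \<open>x1 \<le> x2\<close> by (simp add: antimonoD)
    then show "?h x2 t \<le> ?h x1 t" by simp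
  qed
  also have "\<dots> \<le> integral {0..-x1} (?h x1)"
    using A_integrand_bounds(1)[OF assms] \<open>x1 \<le> x2\<close>
    by (intro integral_subset_le int_h) auto
  finally show "A \<sigma> \<phi> x2 \<le> A \<sigma> \<phi> x1"
    unfolding A_op_eq_shifted_integral[OF assms] using c_pos by (simp add: divide_right_mono)
qed

lemma A_op_mono:
  assumes \<phi>: "admissible \<sigma>1 \<phi>" and \<theta>: "admissible \<sigma>2 \<theta>"
    and "0 < \<sigma>1" and "\<sigma>1 \<le> \<sigma>2" and "\<sigma>2 < 1" and le: "\<And>y. \<phi> y \<le> \<theta> y"
  shows "A \<sigma>1 \<phi> x \<le> A \<sigma>2 \<theta> x"
proof (cases "x < 0")
  case True
  have s1: "0 < \<sigma>1" "\<sigma>1 < 1" and s2: "0 < \<sigma>2" "\<sigma>2 < 1" using assms(3-5) by auto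
  have "integral {x..0} (\<lambda>\<xi>. exp (- M * \<xi>) * G \<sigma>1 \<phi> \<xi>) \<le> integral {x..0} (\<lambda>\<xi>. exp (- M * \<xi>) * G \<sigma>2 \<theta> \<xi>)"
    using weighted_A_integrand_integrable_on[OF \<phi> s1, of 0 0] weighted_A_integrand_integrable_on[OF \<theta> s2, of 0 0]
      A_integrand_mono[OF \<phi> \<theta> less_imp_le[OF s1(1)] assms(4) le]
    by (intro integral_le) auto
  then have "exp (M * x) / c * integral {x..0} (\<lambda>\<xi>. exp (- M * \<xi>) * G \<sigma>1 \<phi> \<xi>)
      \<le> exp (M * x) / c * integral {x..0} (\<lambda>\<xi>. exp (- M * \<xi>) * G \<sigma>2 \<theta> \<xi>)"
    using c_pos by (intro mult_left_mono) auto
  moreover have "exp (M * x) * \<sigma>1 \<le> exp (M * x) * \<sigma>2" using assms(4) by simp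
  ultimately show ?thesis unfolding A_op_eq_integral[OF \<phi> s1 True] A_op_eq_integral[OF \<theta> s2 True] by linarith
qed (use assms in \<open>simp add: A_op_def\<close>)

lemma admissible_A_op:
  assumes "admissible \<sigma> \<phi>" and "0 < \<sigma>" and "\<sigma> < 1"
  shows "admissible \<sigma> (A \<sigma> \<phi>)"
  using A_op_antimono[OF assms] A_op_bounds[OF assms] unfolding admissible_def by blast

text \<open>
  The left-hand side is \<open>exp(M \<xi>)\<close> times the derivative of \<open>-c exp(-M \<xi>) \<psi>(\<xi> + s)\<close>; the bound
  uses the wave equation at speed \<open>cs > c\<close> together with \<open>\<psi>' \<le> 0\<close>.
\<close>
lemma A_integrand_ge_wave:
  assumes tw: "travwave J d f cs \<psi>" and "c < cs" and "\<psi> s = \<sigma>" and \<sigma>: "0 < \<sigma>" "\<sigma> < 1"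
    and "\<xi> \<le> 0"
  shows "c * (M * \<psi> (\<xi> + s) - deriv \<psi> (\<xi> + s)) \<le> G \<sigma> (\<lambda>z. max (\<psi> (z + s)) \<sigma>) \<xi>"
proof -
  let ?\<phi> = "\<lambda>z. max (\<psi> (z + s)) \<sigma>"
  have adm: "admissible \<sigma> ?\<phi>" using admissible_wave_initial[OF tw] \<sigma> by simp
  have "(LINT y|lborel. J (\<xi> + s - y) * \<psi> y) \<le> kernel_conv J (extend_const \<sigma> ?\<phi>) \<xi>"
    using kernel_conv_wave_le_initial[OF kernel tw assms(3)] \<sigma>(1) by (simp add: kernel_conv_translate)
  then have conv: "d * (LINT y|lborel. J (\<xi> + s - y) * \<psi> y) \<le> d * kernel_conv J (extend_const \<sigma> ?\<phi>) \<xi>"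
    using d_pos by simp
  have wave: "d * (LINT y|lborel. J (\<xi> + s - y) * \<psi> y) - d * \<psi> (\<xi> + s) + cs * deriv \<psi> (\<xi> + s)
      + f (\<psi> (\<xi> + s)) = 0"
    using tw unfolding travwave_def by blast
  have "cs * deriv \<psi> (\<xi> + s) \<le> c * deriv \<psi> (\<xi> + s)"
    using travwave_deriv_nonpos(2)[OF tw] assms(2) by (simp add: mult_right_mono_neg)
  then show ?thesis
    using conv wave wave_initial_eq[OF travwave_antimono[OF tw] assms(3,6)]
    unfolding A_integrand_eq_kernel_conv[OF adm less_imp_le[OF \<sigma>(1)]] ftilde_def
    by (simp add: algebra_simps)
qed

lemma A_op_wave_subsolution:
  assumes tw: "travwave J d f cs \<psi>" and "c < cs" and "\<psi> s = \<sigma>" and \<sigma>: "0 < \<sigma>" "\<sigma> < 1"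
  shows "max (\<psi> (x + s)) \<sigma> \<le> A \<sigma> (\<lambda>z. max (\<psi> (z + s)) \<sigma>) x"
proof (cases "x < 0")
  case True
  let ?\<phi> = "\<lambda>z. max (\<psi> (z + s)) \<sigma>"
  have adm: "admissible \<sigma> ?\<phi>" using admissible_wave_initial[OF tw] \<sigma> by simp
  have "((\<lambda>\<xi>. \<psi> (\<xi> + s)) has_real_derivative deriv \<psi> (\<xi> + s)) (at \<xi>)" for \<xi>
    using travwave_deriv_nonpos(1)[OF tw, of "\<xi> + s"] by (simp add: DERIV_shift)
  from has_integral_exp_weighted_deriv[OF this less_imp_le[OF True]]
  have "((\<lambda>\<xi>. c * (exp (- M * \<xi>) * (M * \<psi> (\<xi> + s) - deriv \<psi> (\<xi> + s)))) has_integral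
      c * (exp (- M * x) * \<psi> (x + s) - \<sigma>)) {x..0}"
    using assms(3) by (simp add: has_integral_mult_right)
  then have "c * (exp (- M * x) * \<psi> (x + s) - \<sigma>) \<le> integral {x..0} (\<lambda>\<xi>. exp (- M * \<xi>) * G \<sigma> ?\<phi> \<xi>)"
  proof (rule has_integral_le[OF _ integrable_integral])
    show "(\<lambda>\<xi>. exp (- M * \<xi>) * G \<sigma> ?\<phi> \<xi>) integrable_on {x..0}"
      using weighted_A_integrand_integrable_on[OF adm \<sigma>, of 0 0] by simp
    fix \<xi> assume "\<xi> \<in> {x..0}"
    then show "c * (exp (- M * \<xi>) * (M * \<psi> (\<xi> + s) - deriv \<psi> (\<xi> + s))) \<le> exp (- M * \<xi>) * G \<sigma> ?\<phi> \<xi>"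
      using A_integrand_ge_wave[OF assms, of \<xi>] by (simp add: mult.left_commute)
  qed
  then have "exp (M * x) / c * (c * (exp (- M * x) * \<psi> (x + s) - \<sigma>))
      \<le> exp (M * x) / c * integral {x..0} (\<lambda>\<xi>. exp (- M * \<xi>) * G \<sigma> ?\<phi> \<xi>)"
    using c_pos by (intro mult_left_mono) auto
  moreover have "exp (M * x) / c * (c * (exp (- M * x) * \<psi> (x + s) - \<sigma>)) = \<psi> (x + s) - exp (M * x) * \<sigma>"
    using c_pos by (simp add: field_simps flip: exp_add)
  moreover have "?\<phi> x = \<psi> (x + s)"
    using wave_initial_eq[OF travwave_antimono[OF tw] assms(3)] True by simp
  ultimately show ?thesis unfolding A_op_eq_integral[OF adm \<sigma> True] by simp
next
  case False
  then have "\<psi> (x + s) \<le> \<sigma>" using antimonoD[OF travwave_antimono[OF tw], of s "x + s"] assms(3) by simp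
  then show ?thesis using False by (simp add: A_op_def)
qed

section \<open>Iteration\<close>

lemma admissible_iterate:
  assumes "admissible \<sigma> \<phi>" and "0 < \<sigma>" and "\<sigma> < 1"
  shows "admissible \<sigma> ((A \<sigma> ^^ n) \<phi>)"
  by (induction n) (simp_all add: assms admissible_A_op)

lemma iterate_mono:
  assumes "admissible \<sigma>1 \<phi>" and "admissible \<sigma>2 \<theta>"
    and "0 < \<sigma>1" and "\<sigma>1 \<le> \<sigma>2" and "\<sigma>2 < 1" and "\<And>y. \<phi> y \<le> \<theta> y"
  shows "(A \<sigma>1 ^^ n) \<phi> x \<le> (A \<sigma>2 ^^ n) \<theta> x"
proof (induction n arbitrary: x)
  case (Suc n)
  have "0 < \<sigma>2" "\<sigma>1 < 1" using assms(3-5) by auto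
  with assms show ?case
    using A_op_mono[OF admissible_iterate admissible_iterate _ _ _ Suc] by simp
qed (use assms in simp)

lemma iterate_subsolution_incseq:
  assumes "admissible \<sigma> \<phi>" and "0 < \<sigma>" and "\<sigma> < 1" and "\<And>y. \<phi> y \<le> A \<sigma> \<phi> y"
  shows "incseq (\<lambda>n. (A \<sigma> ^^ n) \<phi> x)"
proof (rule incseq_SucI)
  fix n
  have "(A \<sigma> ^^ n) \<phi> x \<le> (A \<sigma> ^^ n) (A \<sigma> \<phi>) x"
    using assms admissible_A_op[OF assms(1-3)] by (intro iterate_mono) auto
  then show "(A \<sigma> ^^ n) \<phi> x \<le> (A \<sigma> ^^ Suc n) \<phi> x" by (simp only: funpow_Suc_right comp_def)
qed

lemma iterate_subsolution_LIMSEQ: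
  assumes "admissible \<sigma> \<phi>" and "0 < \<sigma>" and "\<sigma> < 1" and "\<And>y. \<phi> y \<le> A \<sigma> \<phi> y"
  shows "(\<lambda>n. (A \<sigma> ^^ n) \<phi> x) \<longlonglongrightarrow> lim (\<lambda>n. (A \<sigma> ^^ n) \<phi> x)"
proof -
  have "\<forall>n. (A \<sigma> ^^ n) \<phi> x \<le> 1"
    using admissible_iterate[OF assms(1-3)] unfolding admissible_def by blast
  with iterate_subsolution_incseq[OF assms] obtain L where "(\<lambda>n. (A \<sigma> ^^ n) \<phi> x) \<longlonglongrightarrow> L"
    by (rule incseq_convergent)
  with limI[OF this] show ?thesis by simp
qed

lemma lim_iterate_antimono:
  assumes "admissible \<sigma> \<phi>" and "0 < \<sigma>" and "\<sigma> < 1" and "\<And>y. \<phi> y \<le> A \<sigma> \<phi> y" and "x \<le> y"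
  shows "lim (\<lambda>n. (A \<sigma> ^^ n) \<phi> y) \<le> lim (\<lambda>n. (A \<sigma> ^^ n) \<phi> x)"
proof (rule LIMSEQ_le[OF iterate_subsolution_LIMSEQ iterate_subsolution_LIMSEQ])
  show "\<exists>N. \<forall>n\<ge>N. (A \<sigma> ^^ n) \<phi> y \<le> (A \<sigma> ^^ n) \<phi> x"
    using admissible_iterate[OF assms(1-3)] assms(5) unfolding admissible_def by (blast dest: antimonoD)
qed (use assms in auto)

lemma lim_iterate_mono:
  assumes "admissible \<sigma>1 \<phi>" and "admissible \<sigma>2 \<theta>" and "0 < \<sigma>1" and "\<sigma>1 \<le> \<sigma>2" and "\<sigma>2 < 1"
    and "\<And>y. \<phi> y \<le> \<theta> y" and "\<And>y. \<phi> y \<le> A \<sigma>1 \<phi> y" and "\<And>y. \<theta> y \<le> A \<sigma>2 \<theta> y"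
  shows "lim (\<lambda>n. (A \<sigma>1 ^^ n) \<phi> x) \<le> lim (\<lambda>n. (A \<sigma>2 ^^ n) \<theta> x)"
proof (rule LIMSEQ_le[OF iterate_subsolution_LIMSEQ iterate_subsolution_LIMSEQ])
  show "\<exists>N. \<forall>n\<ge>N. (A \<sigma>1 ^^ n) \<phi> x \<le> (A \<sigma>2 ^^ n) \<theta> x"
    using iterate_mono[OF assms(1-6)] by blast
qed (use assms in auto)

end

theorem lemma2p2:
  fixes J f \<psi> sh :: "real \<Rightarrow> real" and d c M :: real
  assumes "d > 0" and "kernel_J J" and "kernel_J2 J" and "reaction_f3 f"
    and "0 < c" and "c < min_speed J d f"
    and "M > 0" and "strict_mono_on {0..1} (ftilde d c M f)"
    and "travwave J d f (min_speed J d f) \<psi>"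
    and "\<And>\<sigma>. 0 < \<sigma> \<Longrightarrow> \<sigma> < 1 \<Longrightarrow> \<psi> (sh \<sigma>) = \<sigma>"
  shows "\<exists>\<delta>0. 0 < \<delta>0 \<and> \<delta>0 \<le> 1 \<and>
           (\<forall>\<sigma> x y. 0 < \<sigma> \<and> \<sigma> < \<delta>0 \<and> x \<le> y \<and> y \<le> 0 \<longrightarrow>
              phi_sig J d c M f \<psi> sh \<sigma> x \<ge> phi_sig J d c M f \<psi> sh \<sigma> y)
         \<and> (\<forall>\<sigma>1 \<sigma>2 x. 0 < \<sigma>1 \<and> \<sigma>1 \<le> \<sigma>2 \<and> \<sigma>2 < 1 \<and> x \<le> 0 \<longrightarrow>
              phi_sig J d c M f \<psi> sh \<sigma>1 x \<le> phi_sig J d c M f \<psi> sh \<sigma>2 x)"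
proof -
  interpret A_op_setting J f d c M using assms by unfold_locales auto
  note wave = assms(9) and shift = assms(10)
  let ?\<phi>0 = "\<lambda>\<sigma> z. max (\<psi> (z + sh \<sigma>)) \<sigma>"
  have adm: "admissible \<sigma> (?\<phi>0 \<sigma>)" and sub: "\<And>y. ?\<phi>0 \<sigma> y \<le> A \<sigma> (?\<phi>0 \<sigma>) y"
    if "0 < \<sigma>" "\<sigma> < 1" for \<sigma>
    using admissible_wave_initial[OF wave] A_op_wave_subsolution[OF wave assms(6) shift[OF that] that] that
    by auto
  have "phi_sig J d c M f \<psi> sh \<sigma> y \<le> phi_sig J d c M f \<psi> sh \<sigma> x"
    if "0 < \<sigma>" "\<sigma> < 1" "x \<le> y" for \<sigma> x y
    unfolding phi_sig_def using that by (intro lim_iterate_antimono adm sub) auto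
  moreover have "phi_sig J d c M f \<psi> sh \<sigma>1 x \<le> phi_sig J d c M f \<psi> sh \<sigma>2 x"
    if "0 < \<sigma>1" "\<sigma>1 \<le> \<sigma>2" "\<sigma>2 < 1" for \<sigma>1 \<sigma>2 x
    unfolding phi_sig_def using that travwave_antimono[OF wave]
    by (intro lim_iterate_mono adm sub wave_initial_mono[where sh = sh] shift) auto
  ultimately show ?thesis by (intro exI[of _ 1]) auto
qed

end
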